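(* Let $R$ be a commutative Artinian ring, $M$ a non-zero $R$-module, $N$ and $L$ incomparable PS-hollow submodules of $M$, and $H\subseteq Ass^h(M)$. Then $N+L$ is $H$-PS-hollow if and only if $N$ and $L$ are both $H$-PS-hollow.
   Context: An $R$-submodule $N\leq M$ is PS-hollow iff for every ideal $I\leq R$ and every submodule $L\leq M$: $N\subseteq IM+L$ implies $N\subseteq IM$ or $N\subseteq L$. For a PS-hollow $N\leq M$ put $A_N=\{I\leq R: N\subseteq IM\}$ and let $H_N$ be the set of minimal elements of $A_N$ w.r.t. inclusion. For a set $H$ of ideals, $N$ is $H$-PS-hollow iff $N$ is PS-hollow and $H_N=H$. $Ass^h(M)$ (the associated hollow ideals of $M$) is the set of ideals $I$ with $I\in H_N$ for some PS-hollow submodule $N\leq M$. *)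

theory Defs
  imports "HOL-Algebra.Module" "HOL-Algebra.Ideal"
begin

definition artinian_ring :: "('a, 'c) ring_scheme \<Rightarrow> bool" where
  "artinian_ring R \<longleftrightarrow> cring R \<and>
     (\<forall>f :: nat \<Rightarrow> 'a set. (\<forall>i. ideal (f i) R) \<and> (\<forall>i. f (Suc i) \<subseteq> f i)
        \<longrightarrow> (\<exists>n. \<forall>m\<ge>n. f m = f n))"

definition ideal_mult_module :: "('a, 'c) ring_scheme \<Rightarrow> ('a, 'b, 'd) module_scheme \<Rightarrow> 'a set \<Rightarrow> 'b set" where
  "ideal_mult_module R M I =
     \<Inter> {H. submodule H R M \<and> {a \<odot>\<^bsub>M\<^esub> x | a x. a \<in> I \<and> x \<in> carrier M} \<subseteq> H}"

definition mod_sum :: "('b, 'd) ring_scheme \<Rightarrow> 'b set \<Rightarrow> 'b set \<Rightarrow> 'b set" where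
  "mod_sum M N L = {n \<oplus>\<^bsub>M\<^esub> l | n l. n \<in> N \<and> l \<in> L}"

definition PS_hollow :: "('a, 'c) ring_scheme \<Rightarrow> ('a, 'b, 'd) module_scheme \<Rightarrow> 'b set \<Rightarrow> bool" where
  "PS_hollow R M N \<longleftrightarrow> submodule N R M \<and>
     (\<forall>I L. ideal I R \<longrightarrow> submodule L R M \<longrightarrow>
        N \<subseteq> mod_sum M (ideal_mult_module R M I) L \<longrightarrow>
        N \<subseteq> ideal_mult_module R M I \<or> N \<subseteq> L)"

definition A_set :: "('a, 'c) ring_scheme \<Rightarrow> ('a, 'b, 'd) module_scheme \<Rightarrow> 'b set \<Rightarrow> 'a set set" where
  "A_set R M N = {I. ideal I R \<and> N \<subseteq> ideal_mult_module R M I}"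

definition H_set :: "('a, 'c) ring_scheme \<Rightarrow> ('a, 'b, 'd) module_scheme \<Rightarrow> 'b set \<Rightarrow> 'a set set" where
  "H_set R M N = {I \<in> A_set R M N. \<forall>J \<in> A_set R M N. J \<subseteq> I \<longrightarrow> J = I}"

definition H_PS_hollow :: "('a, 'c) ring_scheme \<Rightarrow> ('a, 'b, 'd) module_scheme \<Rightarrow> 'a set set \<Rightarrow> 'b set \<Rightarrow> bool" where
  "H_PS_hollow R M H N \<longleftrightarrow> PS_hollow R M N \<and> H_set R M N = H"

definition Ass_h :: "('a, 'c) ring_scheme \<Rightarrow> ('a, 'b, 'd) module_scheme \<Rightarrow> 'a set set" where
  "Ass_h R M = {I. \<exists>N. PS_hollow R M N \<and> I \<in> H_set R M N}"

end

theory Submission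
  imports Defs
begin

(* Write A_N for the ideals I with N \<subseteq> IM; then A_(N+L) = A_N \<inter> A_L, and H_N depends only
   on A_N. If N + L is PS-hollow and I \<in> A_N, then N + L \<subseteq> IM + L, and N + L \<subseteq> L is
   impossible because N is not contained in L; hence L \<subseteq> IM, and by symmetry A_N = A_L.
   Conversely, if A_N = A_L and N + L \<subseteq> IM + K, then each of N, L lies in IM or in K, and
   both make the same choice, so N + L is PS-hollow. Finally, by the descending chain condition
   every member of A_N contains a member of H_N, so H_N = H_L forces A_N = A_L. *)

lemma ideal_mult_module_mono: "I \<subseteq> J \<Longrightarrow> ideal_mult_module R M I \<subseteq> ideal_mult_module R M J"
  unfolding ideal_mult_module_def by blast

lemma ideal_mult_module_add_closed:
  assumes "x \<in> ideal_mult_module R M I" and "y \<in> ideal_mult_module R M I"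
  shows "x \<oplus>\<^bsub>M\<^esub> y \<in> ideal_mult_module R M I"
proof -
  have "x \<oplus>\<^bsub>M\<^esub> y \<in> H" if "submodule H R M" and "x \<in> H" "y \<in> H" for H
    using subgroup.m_closed[OF submodule.axioms(1)[OF that(1)] that(2,3)] by simp
  then show ?thesis using assms unfolding ideal_mult_module_def by blast
qed

lemma mod_sum_mono: "N \<subseteq> N' \<Longrightarrow> L \<subseteq> L' \<Longrightarrow> mod_sum M N L \<subseteq> mod_sum M N' L'"
  unfolding mod_sum_def by blast

lemma mod_sum_least:
  assumes "N \<subseteq> X" and "L \<subseteq> X" and "\<And>x y. x \<in> X \<Longrightarrow> y \<in> X \<Longrightarrow> x \<oplus>\<^bsub>M\<^esub> y \<in> X"
  shows "mod_sum M N L \<subseteq> X"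
  using assms unfolding mod_sum_def by blast

lemma A_set_upward_closed: "J \<in> A_set R M N \<Longrightarrow> J \<subseteq> I \<Longrightarrow> ideal I R \<Longrightarrow> I \<in> A_set R M N"
  unfolding A_set_def using ideal_mult_module_mono by fastforce

context module
begin

lemma mod_sum_commute:
  assumes "N \<subseteq> carrier M" and "L \<subseteq> carrier M"
  shows "mod_sum M N L = mod_sum M L N"
proof -
  have "n \<oplus>\<^bsub>M\<^esub> l = l \<oplus>\<^bsub>M\<^esub> n" if "n \<in> N" "l \<in> L" for n l
    using that assms M.a_comm by blast
  then show ?thesis unfolding mod_sum_def by (auto; metis)
qed

lemma submodule_zero_closed: "submodule N R M \<Longrightarrow> \<zero>\<^bsub>M\<^esub> \<in> N"
  using subgroup.one_closed[OF submodule.axioms(1)] by fastforce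

lemma mod_sum_upper_left:
  assumes "submodule N R M" and "submodule L R M"
  shows "N \<subseteq> mod_sum M N L"
proof
  fix n assume "n \<in> N"
  moreover have "n = n \<oplus>\<^bsub>M\<^esub> \<zero>\<^bsub>M\<^esub>" using \<open>n \<in> N\<close> submoduleE(1)[OF assms(1)] by auto
  ultimately show "n \<in> mod_sum M N L"
    unfolding mod_sum_def using submodule_zero_closed[OF assms(2)] by blast
qed

lemma mod_sum_upper_right:
  assumes "submodule N R M" and "submodule L R M"
  shows "L \<subseteq> mod_sum M N L"
  using mod_sum_upper_left[OF assms(2,1)] mod_sum_commute[OF submoduleE(1)[OF assms(1)] submoduleE(1)[OF assms(2)]]
  by simp

lemma submodule_mod_sum:
  assumes N: "submodule N R M" and L: "submodule L R M"
  shows "submodule (mod_sum M N L) R M"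
proof -
  note EN = submoduleE[OF N] and EL = submoduleE[OF L]
  show ?thesis
  proof (rule submoduleI)
    show "mod_sum M N L \<subseteq> carrier M" using EN(1) EL(1) unfolding mod_sum_def by blast
    show "\<zero>\<^bsub>M\<^esub> \<in> mod_sum M N L"
      using mod_sum_upper_left[OF N L] submodule_zero_closed[OF N] by blast
  next
    fix a assume "a \<in> mod_sum M N L"
    then obtain n l where a: "a = n \<oplus>\<^bsub>M\<^esub> l" "n \<in> N" "l \<in> L" unfolding mod_sum_def by blast
    have "\<ominus>\<^bsub>M\<^esub> a = (\<ominus>\<^bsub>M\<^esub> n) \<oplus>\<^bsub>M\<^esub> (\<ominus>\<^bsub>M\<^esub> l)"
      using a EN(1) EL(1) by (simp add: M.minus_add subsetD)
    then show "\<ominus>\<^bsub>M\<^esub> a \<in> mod_sum M N L" unfolding mod_sum_def using a EN(3) EL(3) by blast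
  next
    fix a b assume "a \<in> mod_sum M N L" "b \<in> mod_sum M N L"
    then obtain n l n' l' where a: "a = n \<oplus>\<^bsub>M\<^esub> l" "n \<in> N" "l \<in> L"
      and b: "b = n' \<oplus>\<^bsub>M\<^esub> l'" "n' \<in> N" "l' \<in> L" unfolding mod_sum_def by blast
    have "a \<oplus>\<^bsub>M\<^esub> b = (n \<oplus>\<^bsub>M\<^esub> n') \<oplus>\<^bsub>M\<^esub> (l \<oplus>\<^bsub>M\<^esub> l')"
      using a b EN(1) EL(1) by (simp add: M.a_ac subsetD)
    then show "a \<oplus>\<^bsub>M\<^esub> b \<in> mod_sum M N L" unfolding mod_sum_def using a b EN(5) EL(5) by blast
  next
    fix r x assume r: "r \<in> carrier R" and "x \<in> mod_sum M N L"
    then obtain n l where x: "x = n \<oplus>\<^bsub>M\<^esub> l" "n \<in> N" "l \<in> L" unfolding mod_sum_def by blast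
    have "r \<odot>\<^bsub>M\<^esub> x = (r \<odot>\<^bsub>M\<^esub> n) \<oplus>\<^bsub>M\<^esub> (r \<odot>\<^bsub>M\<^esub> l)"
      using x r EN(1) EL(1) by (simp add: smult_r_distr subsetD)
    then show "r \<odot>\<^bsub>M\<^esub> x \<in> mod_sum M N L" unfolding mod_sum_def using x r EN(4) EL(4) by blast
  qed
qed

lemma A_set_mod_sum:
  assumes "submodule N R M" and "submodule L R M"
  shows "A_set R M (mod_sum M N L) = A_set R M N \<inter> A_set R M L"
proof -
  have "mod_sum M N L \<subseteq> ideal_mult_module R M I \<longleftrightarrow>
      N \<subseteq> ideal_mult_module R M I \<and> L \<subseteq> ideal_mult_module R M I" for I
    using mod_sum_upper_left[OF assms] mod_sum_upper_right[OF assms]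
      mod_sum_least[OF _ _ ideal_mult_module_add_closed] by (meson order_trans)
  then show ?thesis unfolding A_set_def by auto
qed


lemma A_set_subset_if_PS_hollow_mod_sum:
  assumes hollow: "PS_hollow R M (mod_sum M N L)"
    and N: "submodule N R M" and L: "submodule L R M" and "\<not> N \<subseteq> L"
  shows "A_set R M N \<subseteq> A_set R M L"
proof
  fix I assume "I \<in> A_set R M N"
  then have I: "ideal I R" and "N \<subseteq> ideal_mult_module R M I" unfolding A_set_def by auto
  then have "mod_sum M N L \<subseteq> mod_sum M (ideal_mult_module R M I) L" by (simp add: mod_sum_mono)
  then have "mod_sum M N L \<subseteq> ideal_mult_module R M I \<or> mod_sum M N L \<subseteq> L"
    using hollow I L unfolding PS_hollow_def by blast
  moreover have "\<not> mod_sum M N L \<subseteq> L" using mod_sum_upper_left[OF N L] \<open>\<not> N \<subseteq> L\<close> by blast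
  ultimately have "L \<subseteq> ideal_mult_module R M I" using mod_sum_upper_right[OF N L] by blast
  with I show "I \<in> A_set R M L" unfolding A_set_def by blast
qed

lemma PS_hollow_mod_sum:
  assumes N: "PS_hollow R M N" and L: "PS_hollow R M L" and A: "A_set R M N = A_set R M L"
  shows "PS_hollow R M (mod_sum M N L)"
proof -
  have sub: "submodule N R M" "submodule L R M" using N L unfolding PS_hollow_def by auto
  have "mod_sum M N L \<subseteq> ideal_mult_module R M I \<or> mod_sum M N L \<subseteq> K"
    if I: "ideal I R" and K: "submodule K R M"
      and cover: "mod_sum M N L \<subseteq> mod_sum M (ideal_mult_module R M I) K" for I K
  proof -
    have "N \<subseteq> ideal_mult_module R M I \<or> N \<subseteq> K"
      using N I K cover mod_sum_upper_left[OF sub] unfolding PS_hollow_def by blast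
    moreover have "L \<subseteq> ideal_mult_module R M I \<or> L \<subseteq> K"
      using L I K cover mod_sum_upper_right[OF sub] unfolding PS_hollow_def by blast
    moreover have "N \<subseteq> ideal_mult_module R M I \<longleftrightarrow> L \<subseteq> ideal_mult_module R M I"
      using A I unfolding A_set_def by blast
    ultimately consider "N \<subseteq> ideal_mult_module R M I" "L \<subseteq> ideal_mult_module R M I"
      | "N \<subseteq> K" "L \<subseteq> K" by blast
    then show ?thesis
    proof cases
      case 1
      then show ?thesis using mod_sum_least[OF _ _ ideal_mult_module_add_closed] by blast
    next
      case 2
      then show ?thesis using mod_sum_least[OF _ _ submoduleE(5)[OF K]] by blast
    qed
  qed
  then show ?thesis unfolding PS_hollow_def using submodule_mod_sum[OF sub] by blast
qed


lemma PS_hollow_mod_sum_iff_A_set_eq: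
  assumes N: "PS_hollow R M N" and L: "PS_hollow R M L" and "\<not> N \<subseteq> L" and "\<not> L \<subseteq> N"
  shows "PS_hollow R M (mod_sum M N L) \<longleftrightarrow> A_set R M N = A_set R M L"
proof
  have sub: "submodule N R M" "submodule L R M" using N L unfolding PS_hollow_def by auto
  assume "PS_hollow R M (mod_sum M N L)"
  moreover have "mod_sum M L N = mod_sum M N L"
    using mod_sum_commute submoduleE(1) sub by metis
  ultimately show "A_set R M N = A_set R M L"
    using A_set_subset_if_PS_hollow_mod_sum[OF _ sub \<open>\<not> N \<subseteq> L\<close>]
      A_set_subset_if_PS_hollow_mod_sum[of L N, OF _ sub(2,1) \<open>\<not> L \<subseteq> N\<close>]
    by auto
qed (rule PS_hollow_mod_sum[OF N L])

end

lemma artinian_ring_wf_ideal_psubset: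
  assumes "artinian_ring R"
  shows "wf {(J, I). ideal J R \<and> ideal I R \<and> J \<subset> I}"
  unfolding wf_iff_no_infinite_down_chain
proof
  assume "\<exists>f. \<forall>i. (f (Suc i), f i) \<in> {(J, I). ideal J R \<and> ideal I R \<and> J \<subset> I}"
  then obtain f where f: "\<forall>i. (f (Suc i), f i) \<in> {(J, I). ideal J R \<and> ideal I R \<and> J \<subset> I}" ..
  then have ideals: "\<forall>i. ideal (f i) R" and desc: "\<And>i. f (Suc i) \<subset> f i" by auto
  then obtain n where "\<forall>m\<ge>n. f m = f n"
    using assms unfolding artinian_ring_def by (meson psubset_imp_subset)
  then have "f (Suc n) = f n" by (meson le_SucI order_refl)
  with desc show False by (metis less_le)
qed

lemma artinian_ring_H_set_below:
  assumes "artinian_ring R" and "I \<in> A_set R M N"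
  shows "\<exists>J \<in> H_set R M N. J \<subseteq> I"
proof -
  let ?S = "{K \<in> A_set R M N. K \<subseteq> I}"
  have "I \<in> ?S" using assms(2) by blast
  then obtain J where J: "J \<in> ?S"
    and min: "\<And>K. (K, J) \<in> {(J, I). ideal J R \<and> ideal I R \<and> J \<subset> I} \<Longrightarrow> K \<notin> ?S"
    by (rule wfE_min[OF artinian_ring_wf_ideal_psubset[OF assms(1)]]) blast
  have "K = J" if "K \<in> A_set R M N" "K \<subseteq> J" for K
  proof (rule ccontr)
    assume "K \<noteq> J"
    with that J have "(K, J) \<in> {(J, I). ideal J R \<and> ideal I R \<and> J \<subset> I}" and "K \<in> ?S"
      unfolding A_set_def by auto
    with min show False by blast
  qed
  with J show ?thesis unfolding H_set_def by blast
qed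

lemma artinian_ring_H_set_eq_iff_A_set_eq:
  assumes "artinian_ring R"
  shows "H_set R M N = H_set R M L \<longleftrightarrow> A_set R M N = A_set R M L"
proof
  have "A_set R M N \<subseteq> A_set R M L" if "H_set R M N = H_set R M L" for N L
  proof
    fix I assume I: "I \<in> A_set R M N"
    then obtain J where "J \<in> H_set R M N" "J \<subseteq> I"
      using artinian_ring_H_set_below[OF assms] by blast
    then have "J \<in> A_set R M L" "J \<subseteq> I" using that unfolding H_set_def by auto
    moreover have "ideal I R" using I unfolding A_set_def by simp
    ultimately show "I \<in> A_set R M L" by (rule A_set_upward_closed)
  qed
  then show "H_set R M N = H_set R M L \<Longrightarrow> A_set R M N = A_set R M L"
    by (metis subset_antisym)
qed (simp add: H_set_def)

theorem proposition5p5: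
  fixes R :: "('a, 'c) ring_scheme" and M :: "('a, 'b, 'd) module_scheme"
    and N L :: "'b set" and H :: "'a set set"
  assumes "artinian_ring R"
    and "module R M"
    and "carrier M \<noteq> {\<zero>\<^bsub>M\<^esub>}"
    and "PS_hollow R M N" and "PS_hollow R M L"
    and "\<not> N \<subseteq> L" and "\<not> L \<subseteq> N"
    and "H \<subseteq> Ass_h R M"
  shows "H_PS_hollow R M H (mod_sum M N L) \<longleftrightarrow> H_PS_hollow R M H N \<and> H_PS_hollow R M H L"
proof -
  interpret module R M by fact
  have N: "submodule N R M" and L: "submodule L R M"
    using assms(4,5) unfolding PS_hollow_def by auto
  note H_iff_A = artinian_ring_H_set_eq_iff_A_set_eq[OF assms(1)]
  note A_sum = A_set_mod_sum[OF N L]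
  note hollow_iff = PS_hollow_mod_sum_iff_A_set_eq[OF assms(4-7)]
  show ?thesis
  proof
    assume sum: "H_PS_hollow R M H (mod_sum M N L)"
    then have A_eq: "A_set R M N = A_set R M L" using hollow_iff unfolding H_PS_hollow_def by blast
    have "H_set R M N = H_set R M (mod_sum M N L)" "H_set R M L = H_set R M (mod_sum M N L)"
      by (simp_all add: H_iff_A A_sum A_eq)
    then show "H_PS_hollow R M H N \<and> H_PS_hollow R M H L"
      using sum assms(4,5) unfolding H_PS_hollow_def by simp
  next
    assume NL: "H_PS_hollow R M H N \<and> H_PS_hollow R M H L"
    then have "H_set R M N = H_set R M L" unfolding H_PS_hollow_def by simp
    then have A_eq: "A_set R M N = A_set R M L" using H_iff_A by blast
    have "H_set R M (mod_sum M N L) = H_set R M N" by (simp add: H_iff_A A_sum A_eq)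
    then show "H_PS_hollow R M H (mod_sum M N L)"
      using NL A_eq hollow_iff unfolding H_PS_hollow_def by simp
  qed
qed

end
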